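(* Let $n\ge 4$ be even and let $\ell\ge 3$ be odd with $\gcd(n-1,\ell)\ne 1$. Then $\max(n,\ell)=\binom{n}{2}-\left(\frac{n}{2}+1\right)$, and the graph $\overline{C_3\cup\left(\frac{n-4}{2}\right)P_2\cup K_1}$ is an $(n,\ell)$-extremal graph.
   Context: All graphs are finite and simple; $\overline{G}$ is the complement of $G$, $G\cup H$ is disjoint union, $kH$ is $k$ disjoint copies of $H$, $P_k$ is the path on $k$ vertices, $C_3$ the triangle. Vertex labels lie in $\mathbb{Z}_\ell$. In the neighborhood Lights Out game on $G$, toggling a vertex $v$ adds $1$ (mod $\ell$) to the label of each vertex of the closed neighborhood $N[v]$; the game is won when all labels are $0$. $G$ is $N$-AW if the game can be won from every initial labeling. $\max(n,\ell)$ is the maximum number of edges of an $N$-AW graph on $n$ vertices, and an $(n,\ell)$-extremal graph is an $N$-AW graph on $n$ vertices with $\max(n,\ell)$ edges. *)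

theory Defs
  imports "HOL-Number_Theory.Cong"
begin

definition simple_graph :: "nat \<Rightarrow> (nat \<Rightarrow> nat \<Rightarrow> bool) \<Rightarrow> bool" where
  "simple_graph n E \<longleftrightarrow>
     (\<forall>u v. E u v \<longrightarrow> u < n \<and> v < n \<and> u \<noteq> v) \<and> (\<forall>u v. E u v \<longrightarrow> E v u)"

definition num_edges :: "nat \<Rightarrow> (nat \<Rightarrow> nat \<Rightarrow> bool) \<Rightarrow> nat" where
  "num_edges n E = card {(u, v). u < n \<and> v < n \<and> u < v \<and> E u v}"

definition closed_nbhd :: "nat \<Rightarrow> (nat \<Rightarrow> nat \<Rightarrow> bool) \<Rightarrow> nat \<Rightarrow> nat set" where
  "closed_nbhd n E v = {u. u < n \<and> (u = v \<or> E v u)}"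

text \<open>Neighbourhood Lights Out over Z_l: toggling v (t v times) adds t v to the label of
  every vertex of N[v]. The graph is N-AW if every initial labelling b can be
  brought to all zeros (mod l).\<close>
definition N_AW :: "nat \<Rightarrow> nat \<Rightarrow> (nat \<Rightarrow> nat \<Rightarrow> bool) \<Rightarrow> bool" where
  "N_AW n l E \<longleftrightarrow>
     (\<forall>b :: nat \<Rightarrow> int. \<exists>t :: nat \<Rightarrow> nat. \<forall>u < n.
        [b u + (\<Sum>v \<in> {v. v < n \<and> u \<in> closed_nbhd n E v}. int (t v)) = 0] (mod int l))"

definition max_edges :: "nat \<Rightarrow> nat \<Rightarrow> nat" where
  "max_edges n l = Max {num_edges n E | E. simple_graph n E \<and> N_AW n l E}"

definition extremal :: "nat \<Rightarrow> nat \<Rightarrow> (nat \<Rightarrow> nat \<Rightarrow> bool) \<Rightarrow> bool" where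
  "extremal n l E \<longleftrightarrow> simple_graph n E \<and> N_AW n l E \<and> num_edges n E = max_edges n l"

definition graph_complement :: "nat \<Rightarrow> (nat \<Rightarrow> nat \<Rightarrow> bool) \<Rightarrow> nat \<Rightarrow> nat \<Rightarrow> bool" where
  "graph_complement n E u v \<longleftrightarrow> u < n \<and> v < n \<and> u \<noteq> v \<and> \<not> E u v"

text \<open>A concrete copy of C_3 \<union> ((n-4)/2) P_2 \<union> K_1 on {0..<n} (n even, n \<ge> 4):
  triangle on 0,1,2; vertex 3 isolated; edges {4,5},{6,7},...,{n-2,n-1}.\<close>
definition C3_matching_K1 :: "nat \<Rightarrow> nat \<Rightarrow> nat \<Rightarrow> bool" where
  "C3_matching_K1 n u v \<longleftrightarrow> u < n \<and> v < n \<and> u \<noteq> v \<and>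
     ((u < 3 \<and> v < 3) \<or> (4 \<le> u \<and> 4 \<le> v \<and> u div 2 = v div 2))"

end

theory Submission
  imports Defs
begin

text \<open>If an N-AW graph E had more than (n choose 2) - (n/2 + 1) edges, its complement H would
  have at most n/2 edges. Two vertices with equal closed neighbourhoods in E receive the same
  toggles, so a labelling lighting only one of them cannot be won; hence the neighbourhoods in H
  are pairwise distinct, and with at most n/2 edges and n even this forces H to be a perfect
  matching. Then every closed neighbourhood in E has n - 1 elements, and summing all equations of
  the game for a single lit vertex modulo a prime p dividing both n - 1 and l gives 1 = 0 mod p.
  Conversely, for the complement of C_3 + ((n-4)/2) P_2 + K_1 every labelling of the form 2 c is
  reached exactly by an explicit integer toggle vector, and 2 is invertible modulo the odd l.\<close>

definition nbhd :: "nat \<Rightarrow> (nat \<Rightarrow> nat \<Rightarrow> bool) \<Rightarrow> nat \<Rightarrow> nat set" where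
  "nbhd n E v = {u. u < n \<and> E v u}"

lemma card_ordered_pairs_lessThan: "card {(u, v). u < n \<and> v < n \<and> u < v} = n choose 2"
proof (induction n)
  case 0
  show ?case by simp
next
  case (Suc n)
  let ?P = "\<lambda>n. {(u, v). u < n \<and> v < n \<and> u < v}"
  have split: "?P (Suc n) = ?P n \<union> (\<lambda>u. (u, n)) ` {..<n}" by auto
  have "finite (?P n)" by (rule finite_subset[of _ "{..<n} \<times> {..<n}"]) auto
  then have "card (?P (Suc n)) = card (?P n) + card ((\<lambda>u. (u, n)) ` {..<n})"
    unfolding split by (intro card_Un_disjoint) auto
  also have "card ((\<lambda>u. (u, n)) ` {..<n}) = n" by (simp add: card_image inj_on_def)
  finally show ?case using Suc.IH by (simp add: numeral_2_eq_2)
qed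

lemma simple_graph_graph_complement:
  assumes "simple_graph n E"
  shows "simple_graph n (graph_complement n E)"
  using assms by (auto simp: graph_complement_def simple_graph_def)

lemma num_edges_graph_complement:
  assumes "simple_graph n E"
  shows "num_edges n E + num_edges n (graph_complement n E) = n choose 2"
proof -
  let ?P = "{(u, v). u < n \<and> v < n \<and> u < v}"
  let ?A = "{(u, v). u < n \<and> v < n \<and> u < v \<and> E u v}"
  let ?B = "{(u, v). u < n \<and> v < n \<and> u < v \<and> graph_complement n E u v}"
  have fin: "finite ?P" by (rule finite_subset[of _ "{..<n} \<times> {..<n}"]) auto
  have "?A \<subseteq> ?P" "?B \<subseteq> ?P" by auto
  then have "finite ?A" "finite ?B" using fin by (auto intro: finite_subset)
  then have "card (?A \<union> ?B) = card ?A + card ?B"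
    by (intro card_Un_disjoint) (auto simp: graph_complement_def)
  moreover have "?P = ?A \<union> ?B" by (auto simp: graph_complement_def)
  ultimately have "card ?P = card ?A + card ?B" by simp
  then show ?thesis by (simp add: card_ordered_pairs_lessThan num_edges_def)
qed

lemma sum_card_nbhd_eq_twice_num_edges:
  assumes "simple_graph n E"
  shows "(\<Sum>v<n. card (nbhd n E v)) = 2 * num_edges n E"
proof -
  let ?L = "{(u, v). u < n \<and> v < n \<and> u < v \<and> E u v}"
  let ?R = "{(u, v). u < n \<and> v < n \<and> v < u \<and> E u v}"
  have fin: "finite ?L" "finite ?R"
    by (rule finite_subset[of _ "{..<n} \<times> {..<n}"], auto)+
  have "(\<Sum>v<n. card (nbhd n E v)) = card (SIGMA v:{..<n}. nbhd n E v)"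
    by (simp add: card_SigmaI nbhd_def)
  also have "(SIGMA v:{..<n}. nbhd n E v) = ?L \<union> ?R"
    using assms by (fastforce simp: nbhd_def simple_graph_def)
  also have "card (?L \<union> ?R) = card ?L + card ?R"
    using fin by (intro card_Un_disjoint) auto
  also have "?R = prod.swap ` ?L"
    using assms by (auto simp: simple_graph_def)
  also have "card (prod.swap ` ?L) = card ?L"
    by (simp add: card_image)
  finally show ?thesis by (simp add: num_edges_def)
qed

lemma closed_nbhd_sym:
  assumes "simple_graph n E" and "u < n"
  shows "{v. v < n \<and> u \<in> closed_nbhd n E v} = closed_nbhd n E u"
  using assms by (auto simp: closed_nbhd_def simple_graph_def)

lemma closed_nbhd_graph_complement:
  assumes "simple_graph n F" and "u < n"
  shows "closed_nbhd n (graph_complement n F) u = {..<n} - nbhd n F u"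
  using assms by (auto simp: closed_nbhd_def graph_complement_def nbhd_def simple_graph_def)

lemma closed_nbhd_eq_Diff_nbhd_graph_complement:
  assumes "simple_graph n E" and "u < n"
  shows "closed_nbhd n E u = {..<n} - nbhd n (graph_complement n E) u"
  using assms by (auto simp: closed_nbhd_def graph_complement_def nbhd_def simple_graph_def)

lemma N_AWE:
  assumes "N_AW n l E"
  obtains t :: "nat \<Rightarrow> nat" where
    "\<And>u. u < n \<Longrightarrow> [b u + (\<Sum>v \<in> {v. v < n \<and> u \<in> closed_nbhd n E v}. int (t v)) = 0] (mod int l)"
  using assms unfolding N_AW_def by blast

lemma N_AW_imp_inj_on_closed_nbhd:
  assumes sg: "simple_graph n E" and aw: "N_AW n l E" and "l \<noteq> 1"
  shows "inj_on (closed_nbhd n E) {..<n}"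
proof (rule inj_onI, rule ccontr)
  fix a c assume a: "a \<in> {..<n}" and c: "c \<in> {..<n}"
    and eq: "closed_nbhd n E a = closed_nbhd n E c" and "a \<noteq> c"
  obtain t :: "nat \<Rightarrow> nat" where t: "\<And>u. u < n \<Longrightarrow>
      [(if u = a then 1 else 0) + (\<Sum>v \<in> {v. v < n \<and> u \<in> closed_nbhd n E v}. int (t v)) = 0]
        (mod int l)"
    using N_AWE[OF aw, of "\<lambda>u. if u = a then 1 else 0"] by blast
  define S where "S = (\<Sum>v \<in> closed_nbhd n E a. int (t v))"
  have "int l dvd 1 + S"
    using t[of a] a sg by (simp add: S_def closed_nbhd_sym cong_0_iff)
  moreover have "int l dvd S"
    using t[of c] c sg \<open>a \<noteq> c\<close> by (simp add: S_def eq closed_nbhd_sym cong_0_iff)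
  ultimately have "int l dvd 1"
    by (simp add: dvd_add_left_iff)
  then show False
    using \<open>l \<noteq> 1\<close> by simp
qed

lemma sum_closed_nbhd_swap:
  "(\<Sum>u<n. \<Sum>v \<in> {v. v < n \<and> u \<in> closed_nbhd n E v}. f v)
     = (\<Sum>v<n. of_nat (card (closed_nbhd n E v)) * f v)"
proof -
  have "(\<Sum>u<n. \<Sum>v \<in> {v. v < n \<and> u \<in> closed_nbhd n E v}. f v)
      = (\<Sum>v<n. \<Sum>u \<in> {u. u < n \<and> u \<in> closed_nbhd n E v}. f v)"
    using sum.swap_restrict[of "{..<n}" "{..<n}" "\<lambda>u v. f v" "\<lambda>u v. u \<in> closed_nbhd n E v"]
    by simp
  also have "\<dots> = (\<Sum>v<n. of_nat (card (closed_nbhd n E v)) * f v)"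
    by (intro sum.cong refl) (simp add: closed_nbhd_def)
  finally show ?thesis .
qed

lemma N_AW_imp_ex_card_closed_nbhd_not_dvd:
  assumes aw: "N_AW n l E" and p: "prime p" "p dvd l" and "0 < n"
  shows "\<exists>v<n. \<not> p dvd card (closed_nbhd n E v)"
proof (rule ccontr)
  assume "\<not> ?thesis"
  then have dvd_card: "int p dvd int (card (closed_nbhd n E v))" if "v < n" for v
    using that by auto
  obtain t :: "nat \<Rightarrow> nat" where t: "\<And>u. u < n \<Longrightarrow>
      [(if u = 0 then 1 else 0) + (\<Sum>v \<in> {v. v < n \<and> u \<in> closed_nbhd n E v}. int (t v)) = 0]
        (mod int l)"
    using N_AWE[OF aw, of "\<lambda>u. if u = 0 then 1 else 0"] by blast
  have "int p dvd (if u = 0 then 1 else 0) + (\<Sum>v \<in> {v. v < n \<and> u \<in> closed_nbhd n E v}. int (t v))"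
    if "u < n" for u
    using t[OF that] p(2) by (meson cong_0_iff dvd_trans int_dvd_int_iff)
  then have "int p dvd
      (\<Sum>u<n. (if u = 0 then 1 else 0) + (\<Sum>v \<in> {v. v < n \<and> u \<in> closed_nbhd n E v}. int (t v)))"
    by (intro dvd_sum) simp
  also have "\<dots> = 1 + (\<Sum>v<n. int (card (closed_nbhd n E v)) * int (t v))"
    using \<open>0 < n\<close> by (simp add: sum.distrib sum_closed_nbhd_swap)
  finally have "int p dvd 1 + (\<Sum>v<n. int (card (closed_nbhd n E v)) * int (t v))" .
  moreover have "int p dvd (\<Sum>v<n. int (card (closed_nbhd n E v)) * int (t v))"
    using dvd_card by (intro dvd_sum) simp
  ultimately have "int p dvd 1"
    by (simp add: dvd_add_left_iff)
  then show False
    using p(1) by (simp add: prime_gt_1_nat)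
qed

lemma degrees_with_isolated_vertex:
  fixes d :: "nat \<Rightarrow> nat"
  assumes "even n" and w: "w < n" "d w = 0" and pos: "\<And>v. v < n \<Longrightarrow> v \<noteq> w \<Longrightarrow> 1 \<le> d v"
    and "even (\<Sum>v<n. d v)" and sum_le: "(\<Sum>v<n. d v) \<le> n"
  obtains b where "b < n" "b \<noteq> w" "d b = 2" "\<And>v. v < n \<Longrightarrow> v \<noteq> w \<Longrightarrow> v \<noteq> b \<Longrightarrow> d v = 1"
proof -
  have sum_off_w: "(\<Sum>v<n. if v = w then 0 else 1) = n - 1"
    using w by (simp add: sum.If_cases Diff_eq[symmetric])
  have "\<exists>b<n. b \<noteq> w \<and> d b \<noteq> 1"
  proof (rule ccontr)
    assume "\<not> ?thesis"
    then have "(\<Sum>v<n. d v) = (\<Sum>v<n. if v = w then 0 else 1)"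
      using w by (intro sum.cong) auto
    then show False
      using sum_off_w \<open>even n\<close> \<open>even (\<Sum>v<n. d v)\<close> w by presburger
  qed
  then obtain b where b: "b < n" "b \<noteq> w" "d b \<noteq> 1"
    by blast
  define g :: "nat \<Rightarrow> nat" where "g v = (if v = w then 0 else 1) + (if v = b then 1 else 0)" for v
  have g_le_d: "g v \<le> d v" if "v < n" for v
    using pos[OF that] pos[OF b(1,2)] b(3) w by (auto simp: g_def)
  have "(\<Sum>v<n. g v) = n"
    using sum_off_w b(1) w \<open>even n\<close> by (simp add: g_def sum.distrib)
  then have "(\<Sum>v<n. g v) = (\<Sum>v<n. d v)"
    using sum_mono[of "{..<n}" g d] g_le_d sum_le by fastforce
  then have "d v = g v" if "v < n" for v
    using sum_mono_inv[of g "{..<n}" d v] g_le_d that by auto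
  then show thesis
    using that b(1,2) by (simp add: g_def)
qed

text \<open>An isolated vertex forces a vertex of degree 2 whose two neighbours are leaves at it,
  hence twins.\<close>

lemma nbhd_ne_empty_if_twin_free_sparse:
  assumes sg: "simple_graph n H" and inj: "inj_on (nbhd n H) {..<n}" and "even n"
    and sparse: "2 * num_edges n H \<le> n" and w: "w < n"
  shows "nbhd n H w \<noteq> {}"
proof
  assume Nw: "nbhd n H w = {}"
  have fin: "finite (nbhd n H v)" for v
    by (simp add: nbhd_def)
  have "1 \<le> card (nbhd n H v)" if "v < n" "v \<noteq> w" for v
  proof -
    have "nbhd n H v \<noteq> {}"
      using inj_onD[OF inj, of v w] that w Nw by auto
    then show ?thesis
      using fin[of v] by (simp add: Suc_le_eq card_gt_0_iff)
  qed
  moreover have "(\<Sum>v<n. card (nbhd n H v)) = 2 * num_edges n H"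
    by (rule sum_card_nbhd_eq_twice_num_edges[OF sg])
  ultimately obtain b where b: "b < n" "b \<noteq> w" "card (nbhd n H b) = 2"
    and leaf_deg: "\<And>v. v < n \<Longrightarrow> v \<noteq> w \<Longrightarrow> v \<noteq> b \<Longrightarrow> card (nbhd n H v) = 1"
    using degrees_with_isolated_vertex[of n w "\<lambda>v. card (nbhd n H v)"] \<open>even n\<close> w Nw sparse
    by auto
  then obtain x y where xy: "nbhd n H b = {x, y}" "x \<noteq> y"
    by (auto simp: card_2_iff)
  have leaf: "nbhd n H z = {b}" if "z \<in> nbhd n H b" for z
  proof -
    have z: "z < n" "b \<in> nbhd n H z" "z \<noteq> b"
      using that sg b(1) by (auto simp: nbhd_def simple_graph_def)
    then have "card (nbhd n H z) = 1"
      using leaf_deg Nw by auto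
    then show ?thesis
      using z(2) by (auto simp: card_1_singleton_iff)
  qed
  have "x < n" "y < n"
    using xy(1) by (auto simp: nbhd_def)
  then show False
    using inj_onD[OF inj, of x y] leaf xy by auto
qed

lemma card_nbhd_eq_1_if_twin_free_sparse:
  assumes sg: "simple_graph n H" and inj: "inj_on (nbhd n H) {..<n}" and "even n"
    and sparse: "2 * num_edges n H \<le> n" and v: "v < n"
  shows "card (nbhd n H v) = 1"
proof -
  have pos: "1 \<le> card (nbhd n H u)" if "u < n" for u
    using nbhd_ne_empty_if_twin_free_sparse[OF assms(1-4) that]
    by (simp add: Suc_le_eq card_gt_0_iff nbhd_def)
  have "(\<Sum>u<n. card (nbhd n H u)) \<le> (\<Sum>u<n. 1)"
    using sum_card_nbhd_eq_twice_num_edges[OF sg] sparse by simp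
  then have "(\<Sum>u<n. 1) = (\<Sum>u<n. card (nbhd n H u))"
    using sum_mono[of "{..<n}" "\<lambda>_. 1" "\<lambda>u. card (nbhd n H u)"] pos by fastforce
  then show ?thesis
    using sum_mono_inv[of "\<lambda>_. 1" "{..<n}"] pos v by fastforce
qed

lemma num_edges_le_if_N_AW:
  assumes sg: "simple_graph n E" and aw: "N_AW n l E" and "even n" and "0 < n"
    and p: "prime p" "p dvd l" "p dvd n - 1"
  shows "num_edges n E \<le> (n choose 2) - (n div 2 + 1)"
proof (rule ccontr)
  assume many_edges: "\<not> ?thesis"
  define H where "H = graph_complement n E"
  have sgH: "simple_graph n H"
    unfolding H_def by (rule simple_graph_graph_complement[OF sg])
  have sparse: "2 * num_edges n H \<le> n"
    using num_edges_graph_complement[OF sg] many_edges \<open>even n\<close> unfolding H_def by presburger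
  have closed_nbhd_eq: "closed_nbhd n E v = {..<n} - nbhd n H v" if "v < n" for v
    unfolding H_def by (rule closed_nbhd_eq_Diff_nbhd_graph_complement[OF sg that])
  have "l \<noteq> 1"
    using p by auto
  then have "inj_on (closed_nbhd n E) {..<n}"
    by (rule N_AW_imp_inj_on_closed_nbhd[OF sg aw])
  then have inj: "inj_on (nbhd n H) {..<n}"
    by (auto simp: inj_on_def closed_nbhd_eq)
  have "card (closed_nbhd n E v) = n - 1" if "v < n" for v
  proof -
    have "nbhd n H v \<subseteq> {..<n}"
      by (auto simp: nbhd_def)
    then show ?thesis
      using card_nbhd_eq_1_if_twin_free_sparse[OF sgH inj \<open>even n\<close> sparse that]
      by (simp add: closed_nbhd_eq[OF that] card_Diff_subset finite_subset)
  qed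
  then show False
    using N_AW_imp_ex_card_closed_nbhd_not_dvd[OF aw p(1,2) \<open>0 < n\<close>] p(3) by auto
qed

definition partner :: "nat \<Rightarrow> nat" where
  "partner v = (if even v then Suc v else v - 1)"

lemma partner_partner [simp]: "partner (partner v) = v"
  by (simp add: partner_def)

lemma div_2_eq_iff_partner: "u div 2 = v div 2 \<longleftrightarrow> v = u \<or> v = partner u"
proof -
  have "u div 2 = v div 2 \<longleftrightarrow> v = 2 * (u div 2) \<or> v = Suc (2 * (u div 2))"
    by presburger
  moreover have "u = 2 * (u div 2) \<and> partner u = Suc (2 * (u div 2)) \<or>
      u = Suc (2 * (u div 2)) \<and> partner u = 2 * (u div 2)"
    by (cases "even u") (auto simp: partner_def elim!: evenE oddE)
  ultimately show ?thesis
    by auto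
qed

lemma partner_bounds:
  assumes "4 \<le> u" and "u < n" and "even n"
  shows "4 \<le> partner u" and "partner u < n"
  using assms unfolding partner_def by (cases "even u"; simp; presburger)+

lemma nbhd_C3_matching_K1:
  assumes "4 \<le> n" and "u < n" and "even n"
  shows "nbhd n (C3_matching_K1 n) u =
    (if u < 3 then {0, 1, 2} - {u} else if u = 3 then {} else {partner u})"
proof -
  have "partner u \<noteq> u"
    by (auto simp: partner_def dest: odd_pos)
  then show ?thesis
    using assms partner_bounds[OF _ assms(2,3)]
    by (auto simp: nbhd_def C3_matching_K1_def div_2_eq_iff_partner)
qed

lemma simple_graph_C3_matching_K1: "simple_graph n (C3_matching_K1 n)"
  by (auto simp: simple_graph_def C3_matching_K1_def)

lemma num_edges_C3_matching_K1:
  assumes "4 \<le> n" and "even n"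
  shows "num_edges n (C3_matching_K1 n) = n div 2 + 1"
proof -
  let ?d = "\<lambda>v. card (nbhd n (C3_matching_K1 n) v)"
  have "(\<Sum>v<n. ?d v) = (\<Sum>v<4. ?d v) + (\<Sum>v = 4..<n. ?d v)"
    using assms(1) by (simp add: atLeast0LessThan[symmetric] sum.atLeastLessThan_concat)
  also have "(\<Sum>v<4. ?d v) = 6"
    using assms by (simp add: eval_nat_numeral nbhd_C3_matching_K1)
  also have "(\<Sum>v = 4..<n. ?d v) = (\<Sum>v = 4..<n. 1)"
    using assms by (intro sum.cong) (simp_all add: nbhd_C3_matching_K1)
  finally have "2 * num_edges n (C3_matching_K1 n) = n + 2"
    using sum_card_nbhd_eq_twice_num_edges[OF simple_graph_C3_matching_K1] assms(1) by simp
  then show ?thesis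
    using assms(2) by presburger
qed

lemma N_AW_if_int_solvable:
  assumes "0 < l"
    and solvable: "\<And>b. \<exists>x :: nat \<Rightarrow> int. \<forall>u<n.
      [b u + (\<Sum>v \<in> {v. v < n \<and> u \<in> closed_nbhd n E v}. x v) = 0] (mod int l)"
  shows "N_AW n l E"
  unfolding N_AW_def
proof
  fix b :: "nat \<Rightarrow> int"
  obtain x :: "nat \<Rightarrow> int" where x: "\<And>u. u < n \<Longrightarrow>
      [b u + (\<Sum>v \<in> {v. v < n \<and> u \<in> closed_nbhd n E v}. x v) = 0] (mod int l)"
    using solvable by blast
  define t where "t v = nat (x v mod int l)" for v
  have "[int (t v) = x v] (mod int l)" for v
    using \<open>0 < l\<close> by (simp add: t_def cong_def)
  then have "[b u + (\<Sum>v \<in> {v. v < n \<and> u \<in> closed_nbhd n E v}. int (t v))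
      = b u + (\<Sum>v \<in> {v. v < n \<and> u \<in> closed_nbhd n E v}. x v)] (mod int l)" for u
    by (intro cong_add cong_sum) auto
  with x show "\<exists>t. \<forall>u<n. [b u + (\<Sum>v \<in> {v. v < n \<and> u \<in> closed_nbhd n E v}. int (t v)) = 0] (mod int l)"
    by (blast intro: cong_trans)
qed

lemma graph_complement_C3_matching_K1_int_solution:
  fixes c :: "nat \<Rightarrow> int"
  assumes "4 \<le> n" and "even n"
  shows "\<exists>x. \<forall>u<n. (\<Sum>v \<in> closed_nbhd n (graph_complement n (C3_matching_K1 n)) u. x v) = 2 * c u"
proof -
  \<comment> \<open>The entries on the triangle and on the matching are forced by the equations at their
    neighbours; the isolated vertex 3 occurs in no neighbourhood, so x 3 is free and is chosen
    to make the total sum 2 * c 3, which is the equation at vertex 3.\<close>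
  define y where "y v = (if v < 3 then c 3 + 2 * c v - (c 0 + c 1 + c 2)
      else if v = 3 then 0 else 2 * (c 3 - c (partner v)))" for v
  define x where "x v = y v + (if v = 3 then 2 * c 3 - (\<Sum>w<n. y w) else 0)" for v
  have sum_x: "(\<Sum>v<n. x v) = 2 * c 3"
    using assms(1) by (simp add: x_def sum.distrib)
  have sum_nbhd_x: "(\<Sum>v \<in> nbhd n (C3_matching_K1 n) u. x v) = 2 * c 3 - 2 * c u" if "u < n" for u
  proof -
    consider "u < 3" | "u = 3" | "4 \<le> u"
      by linarith
    then show ?thesis
    proof cases
      case 1
      have "x v = c 3 + 2 * c v - (c 0 + c 1 + c 2)" if "v < 3" for v
        using that by (simp add: x_def y_def)
      then have "(\<Sum>v \<in> {0, 1, 2}. x v) - x u = 2 * c 3 - 2 * c u"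
        using 1 by (simp add: eval_nat_numeral)
      then show ?thesis
        using nbhd_C3_matching_K1[OF assms(1) that assms(2)] 1 by (simp add: sum_diff1)
    next
      case 2
      then show ?thesis
        using nbhd_C3_matching_K1[OF assms(1) that assms(2)] by simp
    next
      case 3
      then show ?thesis
        using nbhd_C3_matching_K1[OF assms(1) that assms(2)] partner_bounds[OF 3 that assms(2)]
        by (simp add: x_def y_def div_2_eq_iff_partner)
    qed
  qed
  have "(\<Sum>v \<in> closed_nbhd n (graph_complement n (C3_matching_K1 n)) u. x v) = 2 * c u"
    if "u < n" for u
  proof -
    have "nbhd n (C3_matching_K1 n) u \<subseteq> {..<n}"
      by (auto simp: nbhd_def)
    then show ?thesis
      using sum_x sum_nbhd_x[OF that]
      by (simp add: closed_nbhd_graph_complement[OF simple_graph_C3_matching_K1 that] sum_diff)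
  qed
  then show ?thesis
    by blast
qed

lemma N_AW_graph_complement_C3_matching_K1:
  assumes "4 \<le> n" and "even n" and "odd l"
  shows "N_AW n l (graph_complement n (C3_matching_K1 n))"
proof (rule N_AW_if_int_solvable)
  show "0 < l"
    using \<open>odd l\<close> by (simp add: odd_pos)
next
  fix b :: "nat \<Rightarrow> int"
  let ?G = "graph_complement n (C3_matching_K1 n)"
  obtain x where x: "\<And>u. u < n \<Longrightarrow> (\<Sum>v \<in> closed_nbhd n ?G u. x v) = 2 * - b u"
    using graph_complement_C3_matching_K1_int_solution[OF assms(1,2), of "\<lambda>u. - b u"] by blast
  define h where "h = int ((l + 1) div 2)"
  have h: "2 * h = int l + 1"
    using \<open>odd l\<close> by (simp add: h_def) presburger
  have "[b u + (\<Sum>v \<in> {v. v < n \<and> u \<in> closed_nbhd n ?G v}. h * x v) = 0] (mod int l)"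
    if "u < n" for u
  proof -
    have "(\<Sum>v \<in> {v. v < n \<and> u \<in> closed_nbhd n ?G v}. h * x v) = h * (2 * - b u)"
      using x[OF that] by (simp add: closed_nbhd_sym[OF
            simple_graph_graph_complement[OF simple_graph_C3_matching_K1] that] sum_distrib_left[symmetric])
    also have "\<dots> = - ((2 * h) * b u)"
      by (simp add: algebra_simps)
    also have "\<dots> = - b u - int l * b u"
      unfolding h by (simp add: algebra_simps)
    finally have "b u + (\<Sum>v \<in> {v. v < n \<and> u \<in> closed_nbhd n ?G v}. h * x v) = - (int l * b u)"
      by simp
    then show ?thesis
      by (simp add: cong_0_iff)
  qed
  then show "\<exists>x. \<forall>u<n. [b u + (\<Sum>v \<in> {v. v < n \<and> u \<in> closed_nbhd n ?G v}. x v) = 0] (mod int l)"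
    by blast
qed

theorem proposition4p4:
  fixes n l :: nat
  assumes "n \<ge> 4" and "even n" and "l \<ge> 3" and "odd l" and "gcd (n - 1) l \<noteq> 1"
  shows "max_edges n l = (n choose 2) - (n div 2 + 1)
         \<and> extremal n l (graph_complement n (C3_matching_K1 n))"
proof -
  let ?G = "graph_complement n (C3_matching_K1 n)"
  let ?bound = "(n choose 2) - (n div 2 + 1)"
  obtain p where p: "prime p" "p dvd n - 1" "p dvd l"
    using prime_factor_nat[OF assms(5)] by auto
  have G: "simple_graph n ?G" "N_AW n l ?G" "num_edges n ?G = ?bound"
    using simple_graph_graph_complement[OF simple_graph_C3_matching_K1]
      N_AW_graph_complement_C3_matching_K1[OF assms(1,2,4)]
      num_edges_graph_complement[OF simple_graph_C3_matching_K1, of n]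
      num_edges_C3_matching_K1[OF assms(1,2)]
    by auto
  define S where "S = {num_edges n E | E. simple_graph n E \<and> N_AW n l E}"
  have upper: "k \<le> ?bound" if "k \<in> S" for k
    using that num_edges_le_if_N_AW[OF _ _ assms(2) _ p(1,3,2)] assms(1) by (auto simp: S_def)
  have "?bound \<in> S"
    unfolding S_def using G by (intro CollectI exI[of _ ?G]) simp
  moreover have "finite S"
    using upper by (intro finite_subset[of S "{..?bound}"]) auto
  ultimately have "max_edges n l = ?bound"
    unfolding max_edges_def S_def[symmetric] using upper by (intro Max_eqI)
  with G show ?thesis
    by (simp add: extremal_def)
qed

end
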